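(* For every constant $\epsilon>0$ there exist a constant $C_\epsilon$ and a family of DAGs $\{G_n^\epsilon\}_{n\ge 2}$, where $G_n^\epsilon$ has $n$ nodes and maximum indegree at most $C_\epsilon\log n$, such that for every $n$, $G_n^\epsilon$ is $(e,d)$-depth-robust for all integers $e,d\ge0$ with $e+d\le(1-\epsilon)n$.
   Context: For a DAG $G$, $\mathsf{depth}(G)$ is the number of nodes on a longest directed path; $G-S$ is $G$ with the nodes of $S$ and incident edges removed. $G$ is $(e,d)$-depth-robust if $\mathsf{depth}(G-S)\ge d$ for every node set $S$ with $|S|\le e$. *)

theory Defs
  imports "HOL-Analysis.Analysis"
begin

definition is_dag :: "'a set \<Rightarrow> ('a \<times> 'a) set \<Rightarrow> bool" where
  "is_dag V E \<longleftrightarrow> finite V \<and> E \<subseteq> V \<times> V \<and> acyclic E"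

definition is_path :: "'a set \<Rightarrow> ('a \<times> 'a) set \<Rightarrow> 'a list \<Rightarrow> bool" where
  "is_path V E p \<longleftrightarrow> p \<noteq> [] \<and> set p \<subseteq> V \<and> (\<forall>i. Suc i < length p \<longrightarrow> (p ! i, p ! Suc i) \<in> E)"

text \<open>Number of nodes on a longest directed path of the subgraph induced by V (0 if V is empty).\<close>
definition depth :: "'a set \<Rightarrow> ('a \<times> 'a) set \<Rightarrow> nat" where
  "depth V E = Sup {length p | p. is_path V E p}"

definition indegree :: "('a \<times> 'a) set \<Rightarrow> 'a \<Rightarrow> nat" where
  "indegree E v = card {u. (u, v) \<in> E}"

definition depth_robust :: "'a set \<Rightarrow> ('a \<times> 'a) set \<Rightarrow> nat \<Rightarrow> nat \<Rightarrow> bool" where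
  "depth_robust V E e d \<longleftrightarrow> (\<forall>S. S \<subseteq> V \<longrightarrow> card S \<le> e \<longrightarrow> depth (V - S) E \<ge> d)"

end

theory Submission
  imports Defs
begin

text \<open>
  The graph on \<open>{0..<n}\<close> is the union, over all scales \<open>2^i\<close> and all pairs of adjacent aligned
  blocks of length \<open>2^i\<close>, of a bipartite expander of in-degree \<open>O(m\<^sup>2)\<close> from the left block to the
  right one; such expanders exist by a counting argument, and each node is the head of edges at
  \<open>O(log n)\<close> scales only.

  Let \<open>T\<close> be the set of nodes surviving a deletion, and call \<open>u \<in> T\<close> forward (backward) dense if
  every interval starting (ending) at \<open>u\<close> keeps a \<open>1/K\<close> fraction of its nodes in \<open>T\<close>, where
  \<open>m = 8K\<close>. By induction on the scale, a forward dense \<open>u\<close> reaches inside \<open>T\<close> all but at most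
  \<open>2^i/(4K)\<close> of the nodes of \<open>T\<close> between \<open>u\<close> and the end of the next aligned \<open>2^i\<close>-block, and
  symmetrically for backward dense nodes. At the scale where the windows of \<open>u < v\<close> meet, either
  they overlap in a large part of \<open>T\<close>, or the nodes reached from \<open>u\<close> and those reaching \<open>v\<close> are
  large subsets of adjacent blocks and hence joined by an expander edge. So the nodes that are both
  forward and backward dense lie on a single path, while a covering argument shows that at most
  \<open>2n/(K - 1)\<close> nodes of \<open>T\<close> fail to be dense. Hence deleting \<open>e\<close> nodes leaves depth at least
  \<open>n - e - 2n/(K - 1) \<ge> n - e - \<epsilon>n\<close> once \<open>K - 1 \<ge> 2/\<epsilon>\<close>.
\<close>

section \<open>Paths and depth\<close>

lemma is_path_Nil [simp]: "\<not> is_path V E []"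
  by (simp add: is_path_def)

lemma is_path_singleton [simp]: "is_path V E [x] \<longleftrightarrow> x \<in> V"
  by (simp add: is_path_def)

lemma is_path_Cons_Cons:
  "is_path V E (x # y # p) \<longleftrightarrow> x \<in> V \<and> (x, y) \<in> E \<and> is_path V E (y # p)"
  unfolding is_path_def by (auto simp: less_Suc_eq_0_disj)

lemma is_path_append:
  "is_path V E p \<Longrightarrow> is_path V E q \<Longrightarrow> last p = hd q \<Longrightarrow> is_path V E (p @ tl q)"
proof (induction p rule: induct_list012)
  case (3 x y p)
  then show ?case by (simp add: is_path_Cons_Cons)
qed (auto simp: is_path_def)

lemma rtrancl_imp_path:
  assumes "(a, b) \<in> (E \<inter> T \<times> T)\<^sup>*" "a \<in> T"
  shows "\<exists>p. is_path T E p \<and> hd p = a \<and> last p = b"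
  using assms(1)
proof (induction rule: rtrancl_induct)
  case base
  then show ?case using assms(2) by (intro exI[of _ "[a]"]) simp
next
  case (step b c)
  then obtain p where p: "is_path T E p" "hd p = a" "last p = b" by blast
  have "is_path T E [b, c]" using step by (auto simp: is_path_Cons_Cons)
  then have "is_path T E (p @ [c])" using is_path_append[OF p(1)] p(3) by fastforce
  with p show ?case by (intro exI[of _ "p @ [c]"]) (auto simp: hd_append)
qed

lemma is_path_sorted:
  fixes p :: "'a :: linorder list"
  assumes "\<forall>(a, b) \<in> E. a < b" "is_path V E p"
  shows "sorted_wrt (<) p"
  using assms(2)
proof (induction p rule: induct_list012)
  case (3 x y p)
  then have "x < y" "sorted_wrt (<) (y # p)" using assms(1) by (auto simp: is_path_Cons_Cons)
  then show ?case by auto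
qed auto

lemma length_path_le_card:
  fixes p :: "'a :: linorder list"
  assumes "\<forall>(a, b) \<in> E. a < b" "is_path V E p" "finite V"
  shows "length p \<le> card V"
proof -
  have "distinct p" using is_path_sorted[OF assms(1,2)] strict_sorted_iff by blast
  then have "length p = card (set p)" by (simp add: distinct_card)
  also have "\<dots> \<le> card V" using assms(2,3) by (intro card_mono) (auto simp: is_path_def)
  finally show ?thesis .
qed

lemma path_through_chain:
  fixes C :: "'a :: linorder set"
  assumes "finite C" "C \<noteq> {}" "C \<subseteq> T"
    and "\<forall>u \<in> C. \<forall>v \<in> C. u < v \<longrightarrow> (u, v) \<in> (E \<inter> T \<times> T)\<^sup>*"
  shows "\<exists>p. is_path T E p \<and> C \<subseteq> set p \<and> last p = Max C"
  using assms
proof (induction C rule: finite_linorder_max_induct)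
  case (insert b A)
  show ?case
  proof (cases "A = {}")
    case True
    then show ?thesis using insert by (intro exI[of _ "[b]"]) auto
  next
    case False
    with insert obtain p where p: "is_path T E p" "A \<subseteq> set p" "last p = Max A" by auto
    have "Max A \<in> A" "Max A < b" using False insert by auto
    then obtain q where q: "is_path T E q" "hd q = Max A" "last q = b"
      using rtrancl_imp_path[of "Max A" b E T] insert.prems by auto
    then obtain q' where q': "q = Max A # q'" "q' \<noteq> []"
      using \<open>Max A < b\<close> by (cases q) (auto split: if_splits)
    have "is_path T E (p @ q')" using is_path_append[OF p(1) q(1)] p(3) q(2) q' by simp
    moreover have "b \<in> set q'" "last (p @ q') = b" using q(3) q' by auto
    ultimately show ?thesis using p(2) insert False \<open>Max A < b\<close> by (intro exI[of _ "p @ q'"]) auto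
  qed
qed simp

lemma card_chain_le_depth:
  fixes C :: "'a :: linorder set"
  assumes "\<forall>(a, b) \<in> E. a < b" "finite T" "C \<subseteq> T"
    and "\<forall>u \<in> C. \<forall>v \<in> C. u < v \<longrightarrow> (u, v) \<in> (E \<inter> T \<times> T)\<^sup>*"
  shows "card C \<le> depth T E"
proof (cases "C = {}")
  case False
  have "finite C" using assms(2,3) finite_subset by blast
  then obtain p where p: "is_path T E p" "C \<subseteq> set p"
    using path_through_chain[of C T E] False assms(3,4) by blast
  have "card C \<le> card (set p)" using p by (intro card_mono) auto
  also have "\<dots> \<le> length p" by (rule card_length)
  also have "length p \<le> depth T E" unfolding depth_def
  proof (rule cSup_upper)
    show "length p \<in> {length p |p. is_path T E p}" using p by auto
    show "bdd_above {length p |p. is_path T E p}"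
      using length_path_le_card[OF assms(1) _ assms(2)] by (intro bdd_aboveI[of _ "card T"]) auto
  qed
  finally show ?thesis .
qed simp

section \<open>Bipartite expanders\<close>

definition bipartite_expander :: "'a set \<Rightarrow> 'b set \<Rightarrow> nat \<Rightarrow> nat \<Rightarrow> ('a \<times> 'b) set \<Rightarrow> bool" where
  "bipartite_expander A B m D H \<longleftrightarrow> H \<subseteq> A \<times> B \<and> (\<forall>y. card {x. (x, y) \<in> H} \<le> D) \<and>
     (\<forall>X Y. X \<subseteq> A \<longrightarrow> Y \<subseteq> B \<longrightarrow> card A \<le> m * card X \<longrightarrow> card A \<le> m * card Y \<longrightarrow>
        (\<exists>x \<in> X. \<exists>y \<in> Y. (x, y) \<in> H))"

lemma one_minus_inverse_power_le_half:
  assumes "m \<ge> (2::nat)"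
  shows "((real m - 1) / real m) ^ m \<le> 1 / 2"
proof -
  have m1: "real m - 1 > 0" using assms by simp
  have "2 \<le> 1 + real m * (1 / (real m - 1))" using m1 by (simp add: field_simps)
  also have "\<dots> \<le> (1 + 1 / (real m - 1)) ^ m"
    by (rule Bernoulli_inequality) (use m1 in \<open>simp add: order_trans[of _ 0]\<close>)
  also have "1 + 1 / (real m - 1) = real m / (real m - 1)" using m1 by (simp add: field_simps)
  finally have "2 \<le> (real m / (real m - 1)) ^ m" .
  then have "1 / (real m / (real m - 1)) ^ m \<le> 1 / 2" by (intro divide_left_mono) auto
  then show ?thesis by (simp add: power_divide)
qed

lemma avoiding_power_bound:
  fixes N x y m :: nat
  assumes "m \<ge> 2" "N \<le> m * x" "N \<le> m * y" "x \<le> N"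
  shows "8 ^ N * (N - x) ^ (y * (3 * m\<^sup>2)) \<le> N ^ (y * (3 * m\<^sup>2))"
proof -
  define D where "D = 3 * m\<^sup>2"
  define \<rho> where "\<rho> = (real m - 1) / real m"
  have \<rho>: "0 \<le> \<rho>" "\<rho> \<le> 1" using assms by (auto simp: \<rho>_def field_simps)
  have "real (N - x) * real m \<le> real N * (real m - 1)"
    using assms(2,4) by (simp add: of_nat_diff algebra_simps) (metis of_nat_le_iff of_nat_mult)
  then have q: "real (N - x) \<le> real N * \<rho>" using assms(1) by (simp add: \<rho>_def field_simps)
  have "3 * m * N \<le> 3 * m * (m * y)" using assms(3) by simp
  then have e: "3 * m * N \<le> y * D" by (simp add: D_def power2_eq_square algebra_simps)
  have "real (N - x) ^ (y * D) \<le> (real N * \<rho>) ^ (y * D)"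
    by (rule power_mono[OF q]) simp
  also have "\<dots> = real N ^ (y * D) * \<rho> ^ (y * D)" by (simp add: power_mult_distrib)
  also have "\<rho> ^ (y * D) \<le> (\<rho> ^ m) ^ (3 * N)"
    using power_decreasing[OF e \<rho>] by (simp add: power_mult[symmetric] ac_simps)
  then have "real N ^ (y * D) * \<rho> ^ (y * D) \<le> real N ^ (y * D) * (\<rho> ^ m) ^ (3 * N)"
    by (simp add: mult_left_mono)
  also have "\<dots> \<le> real N ^ (y * D) * (1 / 2) ^ (3 * N)"
    using one_minus_inverse_power_le_half[OF assms(1)] \<rho>
    by (intro mult_left_mono power_mono) (auto simp: \<rho>_def)
  also have "\<dots> = real N ^ (y * D) / 8 ^ N" by (simp add: power_mult power_one_over)
  finally have "real (8 ^ N * (N - x) ^ (y * D)) \<le> real (N ^ (y * D))" by (simp add: field_simps)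
  then show ?thesis by (simp only: of_nat_le_iff D_def)
qed

lemma card_avoiding_maps:
  assumes "finite A" "finite B" "X \<subseteq> A" "Y \<subseteq> B" "m \<ge> 2"
    and "card A \<le> m * card X" "card A \<le> m * card Y"
  shows "8 ^ card A * card (PiE (B \<times> {..<3 * m\<^sup>2}) (\<lambda>q. if fst q \<in> Y then A - X else A))
           \<le> card A ^ (card B * (3 * m\<^sup>2))"
proof -
  define D where "D = 3 * m\<^sup>2"
  let ?I = "B \<times> {..<D}"
  have "finite X" using assms finite_subset by blast
  have "card (PiE ?I (\<lambda>q. if fst q \<in> Y then A - X else A))
          = (\<Prod>q \<in> ?I. if fst q \<in> Y then card A - card X else card A)"
    using assms \<open>finite X\<close> by (simp add: card_PiE card_Diff_subset if_distrib cong: if_cong)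
  also have "\<dots> = (\<Prod>q \<in> ?I \<inter> {q. fst q \<in> Y}. card A - card X) * (\<Prod>q \<in> ?I \<inter> - {q. fst q \<in> Y}. card A)"
    using assms by (simp add: prod.If_cases)
  also have "?I \<inter> {q. fst q \<in> Y} = Y \<times> {..<D}" using assms by auto
  also have "?I \<inter> - {q. fst q \<in> Y} = (B - Y) \<times> {..<D}" by auto
  finally have "card (PiE ?I (\<lambda>q. if fst q \<in> Y then A - X else A))
      = (card A - card X) ^ (card Y * D) * card A ^ (card (B - Y) * D)"
    by (simp add: card_cartesian_product)
  moreover have "card B = card Y + card (B - Y)"
    using card_Int_Diff[OF assms(2), of Y] assms(4) by (simp add: Int_absorb1)
  moreover have "8 ^ card A * (card A - card X) ^ (card Y * D) \<le> card A ^ (card Y * D)"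
    using avoiding_power_bound[of m "card A" "card X" "card Y"] assms card_mono by (auto simp: D_def)
  ultimately show ?thesis by (simp add: D_def[symmetric] power_add algebra_simps)
qed

text \<open>The in-edges of \<open>y \<in> B\<close> have tails \<open>g (y, k) \<in> A\<close>, \<open>k < D\<close>. For a fixed pair \<open>(X, Y)\<close> of
  large sets, at most a \<open>8^-N\<close> fraction of all maps \<open>g\<close> send no slot of \<open>Y\<close> into \<open>X\<close>, and there
  are at most \<open>4^N\<close> such pairs.\<close>

lemma exists_map_hitting_large_sets:
  assumes "finite A" "card A = N" "N \<ge> 1" "finite B" "card B \<le> N" "m \<ge> 2"
  shows "\<exists>g \<in> PiE (B \<times> {..<3 * m\<^sup>2}) (\<lambda>_. A). \<forall>X Y. X \<subseteq> A \<longrightarrow> Y \<subseteq> B \<longrightarrow>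
           N \<le> m * card X \<longrightarrow> N \<le> m * card Y \<longrightarrow> (\<exists>y \<in> Y. \<exists>k < 3 * m\<^sup>2. g (y, k) \<in> X)"
proof -
  define D where "D = 3 * m\<^sup>2"
  define I where "I = B \<times> {..<D}"
  define \<Omega> where "\<Omega> = PiE I (\<lambda>_. A)"
  define P where "P = {(X, Y). X \<subseteq> A \<and> Y \<subseteq> B \<and> N \<le> m * card X \<and> N \<le> m * card Y}"
  define Bad where "Bad = (\<lambda>(X, Y). PiE I (\<lambda>q. if fst q \<in> Y then A - X else A))"
  have fI: "finite I" using assms by (simp add: I_def)
  have card_\<Omega>: "card \<Omega> = N ^ (card B * D)"
    using fI by (simp add: \<Omega>_def card_PiE assms(2) I_def card_cartesian_product)
  have PAB: "P \<subseteq> Pow A \<times> Pow B" by (auto simp: P_def)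
  then have fP: "finite P" using assms by (meson finite_Pow_iff finite_SigmaI finite_subset)
  have card_P: "card P \<le> 4 ^ N"
  proof -
    have "card P \<le> card (Pow A \<times> Pow B)" using PAB assms by (intro card_mono) auto
    also have "\<dots> = 2 ^ N * 2 ^ card B" using assms by (simp add: card_cartesian_product card_Pow)
    also have "\<dots> \<le> 2 ^ N * 2 ^ N" using assms by (intro mult_left_mono power_increasing) auto
    finally show ?thesis by (simp add: power_mult_distrib[symmetric])
  qed
  have card_Bad: "8 ^ N * card (Bad p) \<le> card \<Omega>" if "p \<in> P" for p
    using that card_avoiding_maps[OF assms(1,4) _ _ assms(6)] assms(2)
    by (auto simp: P_def Bad_def I_def D_def card_\<Omega>)
  have "8 ^ N * card (\<Union>p \<in> P. Bad p) \<le> 8 ^ N * (\<Sum>p \<in> P. card (Bad p))"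
    by (intro mult_left_mono card_UN_le fP) simp
  also have "\<dots> = (\<Sum>p \<in> P. 8 ^ N * card (Bad p))" by (simp add: sum_distrib_left)
  also have "\<dots> \<le> card P * card \<Omega>" using sum_mono[OF card_Bad] by simp
  also have "\<dots> < 8 ^ N * card \<Omega>"
  proof -
    have "card \<Omega> > 0" "(4::nat) ^ N < 8 ^ N" using card_\<Omega> assms by (auto intro: power_strict_mono)
    then show ?thesis using card_P by (meson le_less_trans mult_le_mono1 mult_less_mono1)
  qed
  finally have "card (\<Union>p \<in> P. Bad p) < card \<Omega>" by simp
  moreover have "Bad p \<subseteq> \<Omega>" for p by (cases p) (fastforce simp: Bad_def \<Omega>_def PiE_iff split: if_splits)
  ultimately have "\<Omega> \<noteq> (\<Union>p \<in> P. Bad p)" by auto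
  then obtain g where g: "g \<in> \<Omega>" "g \<notin> (\<Union>p \<in> P. Bad p)" using \<open>\<And>p. Bad p \<subseteq> \<Omega>\<close> by blast
  have "\<exists>y \<in> Y. \<exists>k < D. g (y, k) \<in> X"
    if "X \<subseteq> A" "Y \<subseteq> B" "N \<le> m * card X" "N \<le> m * card Y" for X Y
  proof -
    have "g \<notin> Bad (X, Y)" using g that by (auto simp: P_def)
    then obtain q where q: "q \<in> I" "g q \<notin> (if fst q \<in> Y then A - X else A)"
      using g(1) by (auto simp: Bad_def \<Omega>_def PiE_iff)
    then have "fst q \<in> Y" "g q \<in> X" using g(1) by (auto simp: \<Omega>_def PiE_iff split: if_splits)
    then show ?thesis using q(1) by (auto simp: I_def)
  qed
  then show ?thesis using g(1) unfolding \<Omega>_def I_def D_def by blast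
qed

lemma bipartite_expander_exists:
  assumes "finite A" "card A = N" "N \<ge> 1" "finite B" "card B \<le> N" "m \<ge> 2"
  shows "\<exists>H. bipartite_expander A B m (3 * m\<^sup>2) H"
proof -
  define D where "D = 3 * m\<^sup>2"
  obtain g where g: "g \<in> PiE (B \<times> {..<D}) (\<lambda>_. A)"
    and hit: "\<And>X Y. X \<subseteq> A \<Longrightarrow> Y \<subseteq> B \<Longrightarrow> N \<le> m * card X \<Longrightarrow> N \<le> m * card Y \<Longrightarrow>
                \<exists>y \<in> Y. \<exists>k < D. g (y, k) \<in> X"
    using exists_map_hitting_large_sets[OF assms] unfolding D_def by blast
  define H where "H = {(g (y, k), y) | y k. y \<in> B \<and> k < D}"
  have "H \<subseteq> A \<times> B" using g by (auto simp: H_def PiE_def Pi_def)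
  moreover have "card {x. (x, y) \<in> H} \<le> D" for y
  proof -
    have "{x. (x, y) \<in> H} \<subseteq> (\<lambda>k. g (y, k)) ` {..<D}" by (auto simp: H_def)
    then show ?thesis by (metis card_image_le card_lessThan card_mono finite_imageI finite_lessThan le_trans)
  qed
  moreover have "\<exists>x \<in> X. \<exists>y \<in> Y. (x, y) \<in> H"
    if XY: "X \<subseteq> A" "Y \<subseteq> B" "N \<le> m * card X" "N \<le> m * card Y" for X Y
  proof -
    obtain y k where "y \<in> Y" "k < D" "g (y, k) \<in> X" using hit[OF XY] by blast
    then show ?thesis using XY(2) unfolding H_def by blast
  qed
  ultimately show ?thesis unfolding bipartite_expander_def D_def assms(2) by blast
qed

section \<open>The construction\<close>

lemma card_powers_of_two_le_ln:
  assumes "n \<ge> (2::nat)"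
  shows "real (card {i::nat. 2 ^ i \<le> n}) \<le> 3 * ln (real n)"
proof -
  have l2: "2/3 \<le> ln (2::real)" by (rule ln2_ge_two_thirds)
  have lnn: "ln 2 \<le> ln (real n)" using assms by simp
  define L where "L = nat \<lfloor>ln (real n) / ln 2\<rfloor>"
  have "{i::nat. 2 ^ i \<le> n} \<subseteq> {..L}"
  proof
    fix i assume "i \<in> {i::nat. 2 ^ i \<le> n}"
    then have "ln (real (2 ^ i)) \<le> ln (real n)" using assms by simp
    then have "real i \<le> ln (real n) / ln 2" using l2 by (simp add: ln_realpow field_simps)
    then have "i \<le> L" unfolding L_def by linarith
    then show "i \<in> {..L}" by simp
  qed
  then have "card {i::nat. 2 ^ i \<le> n} \<le> card {..L}" by (intro card_mono) auto
  then have "real (card {i::nat. 2 ^ i \<le> n}) \<le> real L + 1" by simp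
  moreover have "real L \<le> ln (real n) / ln 2"
  proof -
    have "0 \<le> ln (real n) / ln 2" using l2 lnn by simp
    then show ?thesis unfolding L_def by linarith
  qed
  moreover have "ln (real n) / ln 2 \<le> 3/2 * ln (real n)"
    using l2 lnn by (simp add: divide_le_eq mult.commute)
  ultimately show ?thesis using l2 lnn by linarith
qed

definition dyadic_block :: "nat \<Rightarrow> nat \<Rightarrow> nat \<Rightarrow> nat set" where
  "dyadic_block n i j = {j * 2 ^ i ..< min ((j + 1) * 2 ^ i) n}"

lemma mem_dyadic_block [simp]:
  "x \<in> dyadic_block n i j \<longleftrightarrow> j * 2 ^ i \<le> x \<and> x < (j + 1) * 2 ^ i \<and> x < n"
  by (auto simp: dyadic_block_def)

definition block_expander :: "nat \<Rightarrow> nat \<Rightarrow> nat \<Rightarrow> nat \<Rightarrow> (nat \<times> nat) set" where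
  "block_expander n m i j =
     (SOME H. bipartite_expander (dyadic_block n i j) (dyadic_block n i (j + 1)) m (3 * m\<^sup>2) H)"

text \<open>Only the left block \<open>j\<close> is required to lie inside \<open>{0..<n}\<close>; the right block \<open>j + 1\<close> may be
  truncated at \<open>n\<close>.\<close>

definition expander_dag :: "nat \<Rightarrow> nat \<Rightarrow> (nat \<times> nat) set" where
  "expander_dag m n = (\<Union>i. \<Union>j \<in> {j. (j + 1) * 2 ^ i \<le> n}. block_expander n m i j)"

definition local_expansion :: "nat \<Rightarrow> nat \<Rightarrow> (nat \<times> nat) set \<Rightarrow> bool" where
  "local_expansion n m E \<longleftrightarrow>
     (\<forall>i j X Y. (j + 1) * 2 ^ i \<le> n \<longrightarrow> X \<subseteq> dyadic_block n i j \<longrightarrow> Y \<subseteq> dyadic_block n i (j + 1) \<longrightarrow>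
        2 ^ i \<le> m * card X \<longrightarrow> 2 ^ i \<le> m * card Y \<longrightarrow> (\<exists>x \<in> X. \<exists>y \<in> Y. (x, y) \<in> E))"

lemma card_dyadic_block: "(j + 1) * 2 ^ i \<le> n \<Longrightarrow> card (dyadic_block n i j) = 2 ^ i"
  by (simp add: dyadic_block_def min_absorb1)

lemma bipartite_expander_block_expander:
  assumes "(j + 1) * 2 ^ i \<le> n" "m \<ge> 2"
  shows "bipartite_expander (dyadic_block n i j) (dyadic_block n i (j + 1)) m (3 * m\<^sup>2)
           (block_expander n m i j)"
proof -
  have "card (dyadic_block n i (j + 1)) \<le> card {(j + 1) * 2 ^ i..<(j + 2) * 2 ^ i}"
    by (intro card_mono) auto
  then have "card (dyadic_block n i (j + 1)) \<le> 2 ^ i" by (simp add: algebra_simps)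
  then have "\<exists>H. bipartite_expander (dyadic_block n i j) (dyadic_block n i (j + 1)) m (3 * m\<^sup>2) H"
    using card_dyadic_block[OF assms(1)] assms(2)
    by (intro bipartite_expander_exists[of _ "2 ^ i"]) (simp_all add: dyadic_block_def)
  then show ?thesis unfolding block_expander_def by (rule someI_ex)
qed

lemma expander_dag_edgeE:
  assumes "(x, y) \<in> expander_dag m n" "m \<ge> 2"
  obtains i j where "(j + 1) * 2 ^ i \<le> n" "y div 2 ^ i = j + 1" "(x, y) \<in> block_expander n m i j"
    and "x < y" "y < n"
proof -
  obtain i j where ij: "(j + 1) * 2 ^ i \<le> n" "(x, y) \<in> block_expander n m i j"
    using assms(1) unfolding expander_dag_def by blast
  then have "(x, y) \<in> dyadic_block n i j \<times> dyadic_block n i (j + 1)"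
    using bipartite_expander_block_expander[OF ij(1) assms(2)] unfolding bipartite_expander_def by blast
  then have "x \<in> dyadic_block n i j" "y \<in> dyadic_block n i (j + 1)" by simp_all
  then have "x < (j + 1) * 2 ^ i" "2 ^ i * (j + 1) \<le> y" "y < 2 ^ i * Suc (j + 1)" "y < n"
    by (simp_all add: mult.commute)
  moreover from this(2,3) have "y div 2 ^ i = j + 1" by (rule div_nat_eqI)
  moreover have "x < y" using calculation(1,2) by (simp add: mult.commute)
  ultimately show thesis using that ij by blast
qed

lemma local_expansion_expander_dag:
  assumes "m \<ge> 2"
  shows "local_expansion n m (expander_dag m n)"
  unfolding local_expansion_def
proof (intro allI impI)
  fix i j X Y
  assume ij: "(j + 1) * 2 ^ i \<le> n" and XY: "X \<subseteq> dyadic_block n i j" "Y \<subseteq> dyadic_block n i (j + 1)"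
    and "2 ^ i \<le> m * card X" "2 ^ i \<le> m * card Y"
  then obtain x y where "x \<in> X" "y \<in> Y" "(x, y) \<in> block_expander n m i j"
    using bipartite_expander_block_expander[OF ij assms] card_dyadic_block[OF ij]
    unfolding bipartite_expander_def by metis
  then show "\<exists>x \<in> X. \<exists>y \<in> Y. (x, y) \<in> expander_dag m n"
    using ij unfolding expander_dag_def by blast
qed

lemma expander_dag_forward: "m \<ge> 2 \<Longrightarrow> (a, b) \<in> expander_dag m n \<Longrightarrow> a < b \<and> b < n"
  by (erule expander_dag_edgeE) auto

lemma is_dag_expander_dag:
  assumes "m \<ge> 2"
  shows "is_dag {0..<n} (expander_dag m n)"
proof -
  have "(a, b) \<in> (expander_dag m n)\<^sup>+ \<Longrightarrow> a < b" for a b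
    by (induction rule: trancl_induct) (use expander_dag_forward[OF assms] in force)+
  then have "acyclic (expander_dag m n)" by (auto intro: acyclicI)
  moreover have "expander_dag m n \<subseteq> {0..<n} \<times> {0..<n}"
    using expander_dag_forward[OF assms, where n = n] by fastforce
  ultimately show ?thesis by (simp add: is_dag_def)
qed

lemma indegree_expander_dag:
  assumes "m \<ge> 2" "n \<ge> 2"
  shows "real (indegree (expander_dag m n) y) \<le> 3 * real (3 * m\<^sup>2) * ln (real n)"
proof -
  define L where "L = {i::nat. 2 ^ i \<le> n}"
  define J where "J = {i \<in> L. (y div 2 ^ i - 1 + 1) * 2 ^ i \<le> n}"
  define In where "In i = {x. (x, y) \<in> block_expander n m i (y div 2 ^ i - 1)}" for i
  have "i \<le> n" if "2 ^ i \<le> n" for i :: nat using less_exp[of i] that by linarith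
  then have "L \<subseteq> {..n}" by (auto simp: L_def)
  then have fL: "finite L" by (rule finite_subset) simp
  then have fJ: "finite J" by (simp add: J_def)
  have In: "In i \<subseteq> dyadic_block n i (y div 2 ^ i - 1) \<and> card (In i) \<le> 3 * m\<^sup>2" if "i \<in> J" for i
    using bipartite_expander_block_expander[of "y div 2 ^ i - 1" i n m] that assms(1)
    by (auto simp: bipartite_expander_def In_def J_def)
  have "{x. (x, y) \<in> expander_dag m n} \<subseteq> (\<Union>i \<in> J. In i)"
  proof
    fix x assume "x \<in> {x. (x, y) \<in> expander_dag m n}"
    then obtain i j where "(j + 1) * 2 ^ i \<le> n" "y div 2 ^ i = j + 1" "(x, y) \<in> block_expander n m i j"
      using expander_dag_edgeE assms(1) by blast
    moreover have "2 ^ i \<le> (j + 1) * 2 ^ i" by simp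
    ultimately have "i \<in> J" "x \<in> In i" by (auto simp: L_def J_def In_def)
    then show "x \<in> (\<Union>i \<in> J. In i)" by blast
  qed
  moreover have "finite (\<Union>i \<in> J. In i)"
    using fJ In by (auto intro: finite_subset simp: dyadic_block_def)
  ultimately have "indegree (expander_dag m n) y \<le> card (\<Union>i \<in> J. In i)"
    unfolding indegree_def by (rule card_mono[rotated])
  also have "\<dots> \<le> (\<Sum>i \<in> J. card (In i))" by (rule card_UN_le[OF fJ])
  also have "\<dots> \<le> (\<Sum>i \<in> J. 3 * m\<^sup>2)" using In by (intro sum_mono) blast
  also have "\<dots> = card J * (3 * m\<^sup>2)" by simp
  also have "\<dots> \<le> card L * (3 * m\<^sup>2)" using fL by (intro mult_le_mono1 card_mono) (auto simp: J_def)
  finally have "real (indegree (expander_dag m n) y) \<le> real (card L) * real (3 * m\<^sup>2)"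
    by (metis of_nat_le_iff of_nat_mult)
  also have "\<dots> \<le> 3 * ln (real n) * real (3 * m\<^sup>2)"
    using card_powers_of_two_le_ln[OF assms(2)] by (intro mult_right_mono) (auto simp: L_def)
  finally show ?thesis by (simp add: algebra_simps)
qed

section \<open>Reachability in locally expanding graphs\<close>

lemma card_Int_le_covering:
  assumes "finite F" "A \<subseteq> F"
  shows "card (T \<inter> F) \<le> card (R \<inter> A) + card (T \<inter> F - R) + card (T \<inter> (F - A))"
proof -
  have "card (T \<inter> F) \<le> card ((R \<inter> A) \<union> (T \<inter> F - R) \<union> (T \<inter> (F - A)))"
    using assms by (intro card_mono) (auto intro: finite_subset)
  also have "\<dots> \<le> card ((R \<inter> A) \<union> (T \<inter> F - R)) + card (T \<inter> (F - A))" by (rule card_Un_le)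
  also have "\<dots> \<le> card (R \<inter> A) + card (T \<inter> F - R) + card (T \<inter> (F - A))"
    using card_Un_le by (rule add_right_mono)
  finally show ?thesis .
qed

lemma card_Int_Un_Diff_le: "card (T \<inter> (A \<union> B) - R) \<le> card (T \<inter> A - R) + card (T \<inter> B - R)"
  by (metis Diff_Un Int_Un_distrib Un_Diff card_Un_le)

lemma div_mult_bounds:
  fixes u P :: nat
  assumes "P > 0"
  shows "u div P * P \<le> u" "u < u div P * P + P"
  using assms by (simp_all add: div_times_less_eq_dividend)
    (metis div_mult_mod_eq mod_less_divisor add_less_cancel_left)

text \<open>\<open>forward_window u i\<close> extends from \<open>u\<close> to the end of the aligned \<open>2^i\<close>-block after
  the one containing \<open>u\<close>; \<open>backward_window v i\<close> extends from the start of the aligned \<open>2^i\<close>-block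
  before the one containing \<open>v\<close> up to \<open>v\<close>.\<close>

definition forward_window :: "nat \<Rightarrow> nat \<Rightarrow> nat set" where
  "forward_window u i = {u..<(u div 2 ^ i + 2) * 2 ^ i}"

definition backward_window :: "nat \<Rightarrow> nat \<Rightarrow> nat set" where
  "backward_window v i = {(v div 2 ^ i - 1) * 2 ^ i..v}"

lemma window_level_between:
  fixes u v :: nat
  assumes "u < v"
  obtains i where "(u div 2 ^ i + 2) * 2 ^ i \<le> Suc v" "Suc v < (u div 2 ^ i div 2 + 2) * 2 ^ Suc i"
proof -
  let ?beyond = "\<lambda>i. Suc v < (u div 2 ^ i + 2) * 2 ^ i"
  have "\<not> ?beyond 0" using assms by simp
  moreover have "?beyond (Suc v)"
    using less_exp[of "Suc v"] by (rule order.strict_trans2) simp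
  ultimately obtain i where "\<not> ?beyond i" "?beyond (Suc i)"
    using exists_least_lemma[of ?beyond] by auto
  moreover have "u div 2 ^ Suc i = u div 2 ^ i div 2" by (simp only: power_Suc2 div_mult2_eq)
  ultimately show thesis using that by (simp only: not_less)
qed

lemma consecutive_blocks:
  fixes u v P :: nat
  assumes "P > 0" "(u div P + 2) * P \<le> Suc v" "v < (u div P div 2 + 2) * (2 * P)"
  shows "u div P + 1 \<le> v div P" "v div P \<le> u div P + 3"
proof -
  define a where "a = u div P"
  define c where "c = v div P"
  have av: "c * P \<le> v" "v < c * P + P" using div_mult_bounds[OF assms(1), of v] by (simp_all add: c_def)
  have "(a div 2 + 2) * (2 * P) = (2 * (a div 2) + 4) * P" by (simp add: algebra_simps)
  also have "\<dots> \<le> (a + 4) * P" by (rule mult_le_mono1) simp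
  finally have "c * P < (a + 4) * P" using assms(3) av unfolding a_def by linarith
  moreover have "(a + 1) * P < (c + 1) * P"
  proof -
    have "(a + 1) * P < (a + 2) * P" using assms(1) by simp
    moreover have "v < (c + 1) * P" using av(2) by simp
    ultimately show ?thesis using assms(2) unfolding a_def by linarith
  qed
  ultimately show "u div P + 1 \<le> v div P" "v div P \<le> u div P + 3"
    unfolding a_def[symmetric] c_def[symmetric] by (simp_all only: mult_less_cancel2) linarith+
qed

lemma sparse_interval_card:
  assumes "finite I" "K * card (T \<inter> I) < card I"
  shows "(K - 1) * card I \<le> K * card (I - T)"
proof -
  have "card I = card (I \<inter> T) + card (I - T)" using assms(1) by (rule card_Int_Diff)
  then show ?thesis using assms(2) by (cases K) (auto simp: Int_commute algebra_simps)
qed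

lemma card_Diff_mult_le:
  assumes "finite F" "S \<subseteq> F" "(K - 1) * card F \<le> K * card S"
  shows "(K - 1) * card (F - S) \<le> card S"
proof -
  have "card F = card (F - S) + card S"
    using card_Int_Diff[OF assms(1), of S] assms(2) by (simp add: Int_absorb1)
  then show ?thesis using assms(3) by (simp add: algebra_simps diff_mult_distrib)
qed

text \<open>\<open>T\<close> stands for the nodes that survive a deletion; paths are taken inside \<open>T\<close>.\<close>

locale locally_expanding =
  fixes n m K :: nat and E :: "(nat \<times> nat) set" and T :: "nat set"
  assumes expansion: "local_expansion n m E" and m_eq: "m = 8 * K"
    and T_subset: "T \<subseteq> {..<n}" and K_pos: "K \<ge> 1"
begin

definition ET :: "(nat \<times> nat) set" where "ET = E \<inter> T \<times> T"
definition reach_from :: "nat \<Rightarrow> nat set" where "reach_from u = {w. (u, w) \<in> ET\<^sup>*}"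
definition reach_to :: "nat \<Rightarrow> nat set" where "reach_to v = {w. (w, v) \<in> ET\<^sup>*}"

definition forward_dense :: "nat \<Rightarrow> bool" where
  "forward_dense u \<longleftrightarrow> u \<in> T \<and> (\<forall>r \<ge> 1. u + r \<le> n \<longrightarrow> r \<le> K * card (T \<inter> {u..<u + r}))"

definition backward_dense :: "nat \<Rightarrow> bool" where
  "backward_dense v \<longleftrightarrow> v \<in> T \<and> (\<forall>r \<ge> 1. r \<le> v + 1 \<longrightarrow> r \<le> K * card (T \<inter> {v + 1 - r..v}))"

lemma reach_from_subset: "u \<in> T \<Longrightarrow> reach_from u \<subseteq> T"
  unfolding reach_from_def by (auto elim: rtranclE simp: ET_def)

lemma reach_to_subset: "v \<in> T \<Longrightarrow> reach_to v \<subseteq> T"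
  unfolding reach_to_def by (auto elim: converse_rtranclE simp: ET_def)

lemma reach_from_refl [simp]: "u \<in> reach_from u"
  by (simp add: reach_from_def)

lemma reach_to_refl [simp]: "v \<in> reach_to v"
  by (simp add: reach_to_def)

lemma reach_from_edge: "u \<in> T \<Longrightarrow> x \<in> reach_from u \<Longrightarrow> (x, y) \<in> E \<Longrightarrow> y \<in> T \<Longrightarrow> y \<in> reach_from u"
  using reach_from_subset by (fastforce simp: reach_from_def ET_def intro: rtrancl_into_rtrancl)

lemma reach_to_edge: "v \<in> T \<Longrightarrow> y \<in> reach_to v \<Longrightarrow> (x, y) \<in> E \<Longrightarrow> x \<in> T \<Longrightarrow> x \<in> reach_to v"
  using reach_to_subset by (fastforce simp: reach_to_def ET_def intro: converse_rtrancl_into_rtrancl)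

lemma edge_Suc: "Suc u < n \<Longrightarrow> (u, Suc u) \<in> E"
  using expansion K_pos unfolding local_expansion_def m_eq
  by (elim allE[of _ 0] allE[of _ u] allE[of _ "{u}"] allE[of _ "{Suc u}"]) auto

lemma expansionD:
  assumes "(j + 1) * 2 ^ i \<le> n" "X \<subseteq> dyadic_block n i j" "Y \<subseteq> dyadic_block n i (j + 1)"
    and "2 ^ i \<le> m * card X" "2 ^ i \<le> m * card Y"
  obtains x y where "x \<in> X" "y \<in> Y" "(x, y) \<in> E"
  using expansion assms unfolding local_expansion_def by blast

lemma forward_dense_card:
  assumes "forward_dense u" "u < w" "w \<le> n"
  shows "8 * (w - u) \<le> m * card (T \<inter> {u..<w})"
  using assms unfolding forward_dense_def m_eq by (auto dest!: spec[of _ "w - u"])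

lemma backward_dense_card:
  assumes "backward_dense v" "w \<le> v"
  shows "8 * (Suc v - w) \<le> m * card (T \<inter> {w..v})"
  using assms unfolding backward_dense_def m_eq by (auto dest!: spec[of _ "Suc v - w"])

lemma few_unreached_forward:
  assumes "u \<in> T" "X \<subseteq> reach_from u" "(j + 1) * 2 ^ i \<le> n"
    and "X \<subseteq> dyadic_block n i j" "N \<subseteq> dyadic_block n i (j + 1)" "2 ^ i \<le> m * card X"
  shows "m * card (T \<inter> N - reach_from u) < 2 ^ i"
proof (rule ccontr)
  assume "\<not> ?thesis"
  then have "2 ^ i \<le> m * card (T \<inter> N - reach_from u)" by simp
  moreover have "T \<inter> N - reach_from u \<subseteq> dyadic_block n i (j + 1)" using assms by auto
  ultimately obtain x y where "x \<in> X" "y \<in> T \<inter> N - reach_from u" "(x, y) \<in> E"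
    using expansionD assms by metis
  then show False using reach_from_edge assms by blast
qed

lemma few_unreached_backward:
  assumes "v \<in> T" "Y \<subseteq> reach_to v" "(j + 1) * 2 ^ i \<le> n"
    and "N \<subseteq> dyadic_block n i j" "Y \<subseteq> dyadic_block n i (j + 1)" "2 ^ i \<le> m * card Y"
  shows "m * card (T \<inter> N - reach_to v) < 2 ^ i"
proof (rule ccontr)
  assume "\<not> ?thesis"
  then have "2 ^ i \<le> m * card (T \<inter> N - reach_to v)" by simp
  moreover have "T \<inter> N - reach_to v \<subseteq> dyadic_block n i j" using assms by auto
  ultimately obtain x y where "x \<in> T \<inter> N - reach_to v" "y \<in> Y" "(x, y) \<in> E"
    using expansionD assms by metis
  then show False using reach_to_edge assms by blast
qed

lemma reach_overlap:
  assumes "finite Z"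
    and "m * card (T \<inter> Z - reach_from u) + m * card (T \<inter> Z - reach_to v) < m * card (T \<inter> Z)"
  shows "(u, v) \<in> ET\<^sup>*"
proof -
  have "card (T \<inter> Z - reach_from u) + card (T \<inter> Z - reach_to v) < card (T \<inter> Z)"
    using assms(2) by (simp flip: add_mult_distrib2)
  have "\<not> T \<inter> Z \<subseteq> (T \<inter> Z - reach_from u) \<union> (T \<inter> Z - reach_to v)"
  proof
    assume "T \<inter> Z \<subseteq> (T \<inter> Z - reach_from u) \<union> (T \<inter> Z - reach_to v)"
    then have "card (T \<inter> Z) \<le> card ((T \<inter> Z - reach_from u) \<union> (T \<inter> Z - reach_to v))"
      using assms(1) by (intro card_mono) auto
    then show False using card_Un_le \<open>_ < card (T \<inter> Z)\<close> by (metis le_trans not_le)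
  qed
  then obtain w where "(u, w) \<in> ET\<^sup>*" "(w, v) \<in> ET\<^sup>*" by (auto simp: reach_from_def reach_to_def)
  then show ?thesis by (rule rtrancl_trans)
qed

lemma reach_link:
  assumes "u \<in> T" "v \<in> T" "(j + 1) * 2 ^ i \<le> n"
    and "X \<subseteq> reach_from u \<inter> dyadic_block n i j" "Y \<subseteq> reach_to v \<inter> dyadic_block n i (j + 1)"
    and "2 ^ i \<le> m * card X" "2 ^ i \<le> m * card Y"
  shows "(u, v) \<in> ET\<^sup>*"
proof -
  obtain x y where "x \<in> reach_from u" "y \<in> reach_to v" "(x, y) \<in> E"
    using expansionD[OF assms(3) _ _ assms(6,7)] assms(4,5) by (metis le_infE subsetD)
  then have "y \<in> reach_from u" using reach_from_edge reach_to_subset assms(1,2) by blast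
  then show ?thesis using \<open>y \<in> reach_to v\<close> by (auto simp: reach_from_def reach_to_def)
qed

lemma card_forward_window:
  assumes "forward_dense u" "(u div 2 ^ i + 2) * 2 ^ i \<le> n"
  shows "8 * 2 ^ i \<le> m * card (T \<inter> forward_window u i)"
proof -
  define w where "w = (u div 2 ^ i + 2) * 2 ^ i"
  have u: "u < u div 2 ^ i * 2 ^ i + 2 ^ i" using div_mult_bounds by auto
  moreover have w: "w = u div 2 ^ i * 2 ^ i + 2 ^ i + 2 ^ i" by (simp add: w_def algebra_simps)
  ultimately have "8 * 2 ^ i \<le> 8 * (w - u)" by simp
  also have "\<dots> \<le> m * card (T \<inter> forward_window u i)"
    using forward_dense_card[OF assms(1), of w] assms(2) u w by (simp add: forward_window_def w_def)
  finally show ?thesis .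
qed

lemma card_backward_window:
  assumes "backward_dense v" "1 \<le> v div 2 ^ i"
  shows "8 * 2 ^ i \<le> m * card (T \<inter> backward_window v i)"
proof -
  define w where "w = (v div 2 ^ i - 1) * 2 ^ i"
  have "v div 2 ^ i * 2 ^ i \<le> v" using div_mult_bounds by auto
  moreover have "w + 2 ^ i = v div 2 ^ i * 2 ^ i"
    using assms(2) by (cases "v div 2 ^ i") (auto simp: w_def)
  ultimately have "8 * 2 ^ i \<le> 8 * (Suc v - w)" "w \<le> v" by linarith+
  then show ?thesis
    using backward_dense_card[OF assms(1) \<open>w \<le> v\<close>] by (simp add: backward_window_def w_def)
qed

lemma forward_window_extension:
  assumes u: "u \<in> T" and a: "a = u div 2 ^ i" and n: "(a div 2 + 2) * 2 ^ Suc i \<le> n"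
    and reached: "6 * 2 ^ i \<le> m * card (reach_from u \<inter> {u..<(a + 2) * 2 ^ i})"
  shows "m * card (T \<inter> {(a + 2) * 2 ^ i..<(a div 2 + 2) * 2 ^ Suc i} - reach_from u) \<le> 2 * 2 ^ i"
proof -
  define P :: nat where "P = 2 ^ i"
  define b where "b = a div 2"
  define N where "N = {(a + 2) * P..<(b + 2) * (2 * P)}"
  have P: "P > 0" "2 ^ Suc i = 2 * P" by (simp_all add: P_def)
  have au: "a * P \<le> u" "u < a * P + P" using div_mult_bounds[OF P(1), of u] by (simp_all add: a P_def)
  have n': "(b + 2) * (2 * P) \<le> n" using n P by (simp add: b_def)
  consider (even) "a = 2 * b" | (odd) "a = 2 * b + 1" unfolding b_def by linarith
  then have "m * card (T \<inter> N - reach_from u) \<le> 2 * P"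
  proof cases
    case even
    have "m * card (T \<inter> N - reach_from u) < 2 ^ Suc i"
      using au even n' P reached
      by (intro few_unreached_forward[OF u, of "reach_from u \<inter> {u..<(a + 2) * P}" b])
        (auto simp: N_def P_def algebra_simps)
    then show ?thesis using P by simp
  next
    case odd
    define X1 where "X1 = reach_from u \<inter> {u..<(a + 1) * P}"
    define X2 where "X2 = reach_from u \<inter> {(a + 1) * P..<(a + 2) * P}"
    have "reach_from u \<inter> {u..<(a + 2) * P} = X1 \<union> X2" using au by (auto simp: X1_def X2_def)
    then have "6 * P \<le> m * card X1 + m * card X2"
      using reached card_Un_le[of X1 X2] unfolding P_def
      by (metis add_mult_distrib2 le_trans mult_le_mono2)
    then consider (low) "2 * P \<le> m * card X1" | (high) "P \<le> m * card X2" by linarith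
    then show ?thesis
    proof cases
      case low
      have "m * card (T \<inter> N - reach_from u) < 2 ^ Suc i"
        using au odd n' P low
        by (intro few_unreached_forward[OF u, of X1 b]) (auto simp: X1_def N_def algebra_simps)
      then show ?thesis using P by simp
    next
      case high
      have "m * card (T \<inter> N - reach_from u) < 2 ^ i"
        using au odd n' P high
        by (intro few_unreached_forward[OF u, of X2 "a + 1"]) (auto simp: X2_def N_def P_def algebra_simps)
      then show ?thesis by (simp add: P_def)
    qed
  qed
  then show ?thesis by (simp add: N_def P_def b_def)
qed

lemma reach_from_window:
  assumes dense: "forward_dense u"
  shows "(u div 2 ^ i + 2) * 2 ^ i \<le> n \<Longrightarrow>
           m * card (T \<inter> forward_window u i - reach_from u) \<le> 2 * 2 ^ i"
proof (induction i)
  case 0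
  have "T \<inter> forward_window u 0 - reach_from u = {}"
    using dense edge_Suc[of u] reach_from_edge[of u u "Suc u"] 0
    by (auto simp: forward_dense_def forward_window_def less_Suc_eq)
  then show ?case by (simp only: card.empty)
next
  case (Suc i)
  define P :: nat where "P = 2 ^ i"
  define a where "a = u div P"
  define W where "W = forward_window u i"
  define N where "N = {(a + 2) * P..<(a div 2 + 2) * 2 ^ Suc i}"
  have u: "u \<in> T" using dense by (simp add: forward_dense_def)
  have div: "u div 2 ^ Suc i = a div 2" by (simp only: power_Suc2 div_mult2_eq a_def P_def)
  have au: "a * P \<le> u" "u < a * P + P" using div_mult_bounds[of P u] by (simp_all add: a_def P_def)
  have "a + 2 \<le> (a div 2 + 2) * 2" by presburger
  then have "(a + 2) * P \<le> (a div 2 + 2) * 2 * P" by (rule mult_le_mono1)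
  then have end_le: "(a + 2) * P \<le> (a div 2 + 2) * 2 ^ Suc i" by (simp add: P_def ac_simps)
  have n: "(a div 2 + 2) * 2 ^ Suc i \<le> n" using Suc.prems by (simp only: div)
  have W: "W = {u..<(a + 2) * P}" by (simp add: W_def forward_window_def a_def P_def)
  have "forward_window u (Suc i) = W \<union> N"
    using au end_le unfolding W N_def forward_window_def div by (subst ivl_disj_un_two(3)) auto
  have IH: "m * card (T \<inter> W - reach_from u) \<le> 2 * P"
    using Suc.IH end_le n by (simp add: W_def a_def P_def)
  have "8 * P \<le> m * card (T \<inter> W)"
    using card_forward_window[OF dense, of i] end_le n by (simp add: W_def a_def P_def)
  also have "\<dots> \<le> m * card (reach_from u \<inter> W) + m * card (T \<inter> W - reach_from u)"
    using card_Int_le_covering[of W W T "reach_from u"] by (simp add: W flip: add_mult_distrib2)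
  finally have "6 * P \<le> m * card (reach_from u \<inter> W)" using IH by linarith
  then have "m * card (T \<inter> N - reach_from u) \<le> 2 * P"
    using forward_window_extension[OF u _ n] by (simp add: N_def W a_def P_def)
  moreover have "m * card (T \<inter> (W \<union> N) - reach_from u)
      \<le> m * card (T \<inter> W - reach_from u) + m * card (T \<inter> N - reach_from u)"
    unfolding add_mult_distrib2[symmetric] by (rule mult_le_mono2) (rule card_Int_Un_Diff_le)
  ultimately show ?case using IH \<open>forward_window u (Suc i) = W \<union> N\<close> by (simp add: P_def)
qed

lemma backward_window_extension:
  assumes v: "v \<in> T" and a: "a = v div 2 ^ i" and b: "1 \<le> a div 2"
    and reached: "6 * 2 ^ i \<le> m * card (reach_to v \<inter> {(a - 1) * 2 ^ i..v})"
  shows "m * card (T \<inter> {(a div 2 - 1) * 2 ^ Suc i..<(a - 1) * 2 ^ i} - reach_to v) \<le> 2 * 2 ^ i"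
proof -
  define P :: nat where "P = 2 ^ i"
  obtain c where c: "a div 2 = c + 1" using b by (metis add.commute le_Suc_ex)
  define N where "N = {c * (2 * P)..<(a - 1) * P}"
  have P: "P > 0" "2 ^ Suc i = 2 * P" by (simp_all add: P_def)
  have av: "a * P \<le> v" "v < a * P + P" using div_mult_bounds[OF P(1), of v] by (simp_all add: a P_def)
  have "v < n" using v T_subset by auto
  consider (even) "a = 2 * c + 2" | (odd) "a = 2 * c + 3" using c by linarith
  then have "m * card (T \<inter> N - reach_to v) \<le> 2 * P"
  proof cases
    case even
    define Y1 where "Y1 = reach_to v \<inter> {a * P..v}"
    define Y2 where "Y2 = reach_to v \<inter> {(a - 1) * P..<a * P}"
    have "reach_to v \<inter> {(a - 1) * P..v} = Y1 \<union> Y2" using av even by (auto simp: Y1_def Y2_def)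
    then have "6 * P \<le> m * card Y1 + m * card Y2"
      using reached card_Un_le[of Y1 Y2] unfolding P_def
      by (metis add_mult_distrib2 le_trans mult_le_mono2)
    then consider (high) "2 * P \<le> m * card Y1" | (low) "P \<le> m * card Y2" by linarith
    then show ?thesis
    proof cases
      case high
      have "m * card (T \<inter> N - reach_to v) < 2 ^ Suc i"
        using av even \<open>v < n\<close> P high
        by (intro few_unreached_backward[OF v, of Y1 c]) (auto simp: Y1_def N_def algebra_simps)
      then show ?thesis using P by simp
    next
      case low
      have "m * card (T \<inter> N - reach_to v) < 2 ^ i"
        using av even \<open>v < n\<close> P low
        by (intro few_unreached_backward[OF v, of Y2 "2 * c"]) (auto simp: Y2_def N_def P_def algebra_simps)
      then show ?thesis by (simp add: P_def)
    qed
  next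
    case odd
    have "m * card (T \<inter> N - reach_to v) < 2 ^ Suc i"
      using av odd \<open>v < n\<close> P reached
      by (intro few_unreached_backward[OF v, of "reach_to v \<inter> {(a - 1) * P..v}" c])
        (auto simp: N_def P_def algebra_simps)
    then show ?thesis using P by simp
  qed
  then show ?thesis by (simp add: N_def P_def c)
qed

lemma reach_to_window:
  assumes dense: "backward_dense v"
  shows "1 \<le> v div 2 ^ i \<Longrightarrow> m * card (T \<inter> backward_window v i - reach_to v) \<le> 2 * 2 ^ i"
proof (induction i)
  case 0
  have "v < n" using dense T_subset by (auto simp: backward_dense_def)
  moreover have "{v - 1..v} = {v - 1, v}" using 0 by auto
  ultimately have "T \<inter> backward_window v 0 - reach_to v = {}"
    using dense edge_Suc[of "v - 1"] reach_to_edge[of v v "v - 1"] 0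
    by (auto simp: backward_dense_def backward_window_def)
  then show ?case by (simp only: card.empty)
next
  case (Suc i)
  define P :: nat where "P = 2 ^ i"
  define a where "a = v div P"
  define W where "W = backward_window v i"
  define N where "N = {(a div 2 - 1) * 2 ^ Suc i..<(a - 1) * P}"
  have v: "v \<in> T" using dense by (simp add: backward_dense_def)
  have div: "v div 2 ^ Suc i = a div 2" by (simp only: power_Suc2 div_mult2_eq a_def P_def)
  have av: "a * P \<le> v" "v < a * P + P" using div_mult_bounds[of P v] by (simp_all add: a_def P_def)
  have b: "1 \<le> a div 2" using Suc.prems by (simp only: div)
  have "(a div 2 - 1) * 2 \<le> a - 1" by presburger
  then have "(a div 2 - 1) * 2 * P \<le> (a - 1) * P" by (rule mult_le_mono1)
  then have start_le: "(a div 2 - 1) * 2 ^ Suc i \<le> (a - 1) * P" by (simp add: P_def ac_simps)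
  have W: "W = {(a - 1) * P..v}" by (simp add: W_def backward_window_def a_def P_def)
  have "(a - 1) * P \<le> v" using av by (meson diff_le_self le_trans mult_le_mono1)
  then have "backward_window v (Suc i) = N \<union> W"
    using start_le unfolding W N_def backward_window_def div by (subst ivl_disj_un_two(7)) auto
  have IH: "m * card (T \<inter> W - reach_to v) \<le> 2 * P"
    using Suc.IH b by (simp add: W_def a_def P_def)
  have "8 * P \<le> m * card (T \<inter> W)"
    using card_backward_window[OF dense, of i] b by (simp add: W_def a_def P_def)
  also have "\<dots> \<le> m * card (reach_to v \<inter> W) + m * card (T \<inter> W - reach_to v)"
    using card_Int_le_covering[of W W T "reach_to v"] by (simp add: W flip: add_mult_distrib2)
  finally have "6 * P \<le> m * card (reach_to v \<inter> W)" using IH by linarith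
  then have "m * card (T \<inter> N - reach_to v) \<le> 2 * P"
    using backward_window_extension[OF v _ b] by (simp add: N_def W a_def P_def)
  moreover have "m * card (T \<inter> (N \<union> W) - reach_to v)
      \<le> m * card (T \<inter> N - reach_to v) + m * card (T \<inter> W - reach_to v)"
    unfolding add_mult_distrib2[symmetric] by (rule mult_le_mono2) (rule card_Int_Un_Diff_le)
  ultimately show ?case using IH \<open>backward_window v (Suc i) = N \<union> W\<close> by (simp add: P_def)
qed

lemma reach_link_intervals:
  assumes "u \<in> T" "v \<in> T" "w \<le> v"
    and "j * 2 ^ k \<le> s" "t \<le> (j + 1) * 2 ^ k" "(j + 1) * 2 ^ k \<le> w" "v < (j + 2) * 2 ^ k"
    and "2 ^ k \<le> m * card (reach_from u \<inter> {s..<t})" "2 ^ k \<le> m * card (reach_to v \<inter> {w..v})"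
  shows "(u, v) \<in> ET\<^sup>*"
proof (rule reach_link[OF assms(1,2) _ _ _ assms(8,9)])
  have "v < n" using assms(2) T_subset by auto
  then show "(j + 1) * 2 ^ k \<le> n" using assms(3,6) by linarith
  show "reach_from u \<inter> {s..<t} \<subseteq> reach_from u \<inter> dyadic_block n k j"
    using assms(3-6) \<open>v < n\<close> by auto
  show "reach_to v \<inter> {w..v} \<subseteq> reach_to v \<inter> dyadic_block n k (j + 1)"
    using assms(6,7) \<open>v < n\<close> by auto
qed

lemma windows_meet:
  assumes fwd: "forward_dense u" and bwd: "backward_dense v"
    and n: "(u div 2 ^ i + 2) * 2 ^ i \<le> n" and v: "1 \<le> v div 2 ^ i"
    and Z: "Z \<subseteq> forward_window u i" "Z \<subseteq> backward_window v i" "4 * 2 ^ i < m * card (T \<inter> Z)"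
  shows "(u, v) \<in> ET\<^sup>*"
proof (rule reach_overlap)
  show "finite Z" using Z(1) by (rule finite_subset) (simp add: forward_window_def)
  have "card (T \<inter> Z - reach_from u) \<le> card (T \<inter> forward_window u i - reach_from u)"
    "card (T \<inter> Z - reach_to v) \<le> card (T \<inter> backward_window v i - reach_to v)"
    using Z(1,2) by (auto intro!: card_mono simp: forward_window_def backward_window_def)
  then have "m * card (T \<inter> Z - reach_from u) \<le> 2 * 2 ^ i" "m * card (T \<inter> Z - reach_to v) \<le> 2 * 2 ^ i"
    using reach_from_window[OF fwd n] reach_to_window[OF bwd v] mult_le_mono2 le_trans by blast+
  then show "m * card (T \<inter> Z - reach_from u) + m * card (T \<inter> Z - reach_to v) < m * card (T \<inter> Z)"
    using Z(3) by linarith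
qed

lemma windows_linked:
  assumes fwd: "forward_dense u" and bwd: "backward_dense v"
    and n: "(u div 2 ^ i + 2) * 2 ^ i \<le> n" and v: "1 \<le> v div 2 ^ i"
    and X: "{s..<t} \<subseteq> forward_window u i" "m * card (T \<inter> (forward_window u i - {s..<t})) \<le> 4 * 2 ^ i"
    and Y: "{w..v} \<subseteq> backward_window v i" "m * card (T \<inter> (backward_window v i - {w..v})) \<le> 4 * 2 ^ i"
    and blocks: "j * 2 ^ Suc i \<le> s" "t \<le> (j + 1) * 2 ^ Suc i" "(j + 1) * 2 ^ Suc i \<le> w"
      "v < (j + 2) * 2 ^ Suc i" "w \<le> v"
  shows "(u, v) \<in> ET\<^sup>*"
proof (rule reach_link_intervals[OF _ _ blocks(5,1-4)])
  show "u \<in> T" "v \<in> T" using fwd bwd by (simp_all add: forward_dense_def backward_dense_def)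
  have "card (T \<inter> forward_window u i) \<le> card (reach_from u \<inter> {s..<t})
      + card (T \<inter> forward_window u i - reach_from u) + card (T \<inter> (forward_window u i - {s..<t}))"
    using X(1) by (intro card_Int_le_covering) (simp add: forward_window_def)
  then have "m * card (T \<inter> forward_window u i) \<le> m * card (reach_from u \<inter> {s..<t})
      + m * card (T \<inter> forward_window u i - reach_from u) + m * card (T \<inter> (forward_window u i - {s..<t}))"
    by (simp flip: add_mult_distrib2)
  then show "2 ^ Suc i \<le> m * card (reach_from u \<inter> {s..<t})"
    using card_forward_window[OF fwd n] reach_from_window[OF fwd n] X(2) by simp
  have "card (T \<inter> backward_window v i) \<le> card (reach_to v \<inter> {w..v})
      + card (T \<inter> backward_window v i - reach_to v) + card (T \<inter> (backward_window v i - {w..v}))"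
    using Y(1) by (intro card_Int_le_covering) (simp add: backward_window_def)
  then have "m * card (T \<inter> backward_window v i) \<le> m * card (reach_to v \<inter> {w..v})
      + m * card (T \<inter> backward_window v i - reach_to v) + m * card (T \<inter> (backward_window v i - {w..v}))"
    by (simp flip: add_mult_distrib2)
  then show "2 ^ Suc i \<le> m * card (reach_to v \<inter> {w..v})"
    using card_backward_window[OF bwd v] reach_to_window[OF bwd v] Y(2) by simp
qed

lemma dense_nodes_connected:
  assumes fwd: "forward_dense u" and bwd: "backward_dense v" and "u < v"
  shows "(u, v) \<in> ET\<^sup>*"
proof -
  obtain i where e1: "(u div 2 ^ i + 2) * 2 ^ i \<le> Suc v"
    and e2: "Suc v < (u div 2 ^ i div 2 + 2) * 2 ^ Suc i"
    using window_level_between[OF \<open>u < v\<close>] .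
  define P :: nat where "P = 2 ^ i"
  define a where "a = u div P"
  define c where "c = v div P"
  define h where "h = a div 2"
  have "v < n" using bwd T_subset by (auto simp: backward_dense_def)
  have P: "P > 0" "2 ^ Suc i = 2 * P" by (simp_all add: P_def)
  have au: "a * P \<le> u" "u < a * P + P" using div_mult_bounds[OF P(1), of u] by (simp_all add: a_def)
  have av: "c * P \<le> v" "v < c * P + P" using div_mult_bounds[OF P(1), of v] by (simp_all add: c_def)
  have e1': "(a + 2) * P \<le> Suc v" and e2': "v < (h + 2) * 2 ^ Suc i"
    using e1 e2 P by (simp_all add: a_def h_def P_def)
  have ac: "a + 1 \<le> c" "c \<le> a + 3"
    using consecutive_blocks[OF P(1)] e1' e2' P(2) by (simp_all add: a_def c_def h_def)
  have n: "(u div 2 ^ i + 2) * 2 ^ i \<le> n" and v: "1 \<le> v div 2 ^ i"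
    using e1 \<open>v < n\<close> ac by (simp_all add: c_def P_def)
  have F: "forward_window u i = {u..<(a + 2) * P}" by (simp add: forward_window_def a_def P_def)
  have B: "backward_window v i = {(c - 1) * P..v}" by (simp add: backward_window_def c_def P_def)
  have h: "h * 2 ^ Suc i \<le> a * P" "(a + 1) * P \<le> (h + 1) * 2 ^ Suc i"
    "(h + 1) * 2 ^ Suc i \<le> (a + 2) * P"
  proof -
    have "h * 2 ^ Suc i = (2 * h) * P" "(h + 1) * 2 ^ Suc i = (2 * h + 2) * P" by (simp_all add: P_def)
    moreover have "2 * h \<le> a" "a + 1 \<le> 2 * h + 2" by (simp_all add: h_def)
    ultimately show "h * 2 ^ Suc i \<le> a * P" "(a + 1) * P \<le> (h + 1) * 2 ^ Suc i"
      "(h + 1) * 2 ^ Suc i \<le> (a + 2) * P" by (simp_all only: mult_le_mono1)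
  qed
  consider (near) "c = a + 1" | (mid) "c = a + 2" | (far) "c = a + 3" using ac by linarith
  then show ?thesis
  proof cases
    case near
    have "v < (a + 2) * P" using av near by (simp add: algebra_simps)
    then have "forward_window u i \<subseteq> backward_window v i" using au near e1' by (auto simp: F B)
    moreover have "4 * 2 ^ i < m * card (T \<inter> forward_window u i)"
      using card_forward_window[OF fwd n] P(1) unfolding P_def by linarith
    ultimately show ?thesis using windows_meet[OF fwd bwd n v] by blast
  next
    case mid
    define Z where "Z = {(a + 1) * P..<(a + 2) * P}"
    have Z: "forward_window u i - {u..<(a + 1) * P} = Z" "backward_window v i - {(a + 2) * P..v} = Z"
      using au av mid e1' by (auto simp: F B Z_def algebra_simps)
    show ?thesis
    proof (cases "4 * 2 ^ i < m * card (T \<inter> Z)")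
      case True
      then show ?thesis using windows_meet[OF fwd bwd n v] Z by blast
    next
      case False
      have "(a + 2) * P \<le> v" using av mid by simp
      show ?thesis
      proof (rule windows_linked[OF fwd bwd n v, where j = h and s = u and t = "(a + 1) * P"
            and w = "(a + 2) * P"])
        show "m * card (T \<inter> (forward_window u i - {u..<(a + 1) * P})) \<le> 4 * 2 ^ i"
          "m * card (T \<inter> (backward_window v i - {(a + 2) * P..v})) \<le> 4 * 2 ^ i"
          using False Z by simp_all
      qed (use au h e2' \<open>(a + 2) * P \<le> v\<close> in \<open>auto simp: F B mid\<close>)
    qed
  next
    case far
    have "a = 2 * h"
    proof (rule ccontr)
      assume "a \<noteq> 2 * h"
      then have "c = 2 * h + 4" using far unfolding h_def by presburger
      then have "(h + 2) * 2 ^ Suc i = c * P" by (simp add: P_def algebra_simps)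
      then show False using av e2' by linarith
    qed
    then have "(a + 2) * P = (h + 1) * 2 ^ Suc i" by (simp add: P_def)
    moreover have "(a + 2) * P \<le> v" by (rule order_trans[OF mult_le_mono1 av(1)]) (simp add: far)
    ultimately show ?thesis using au h e2'
      by (intro windows_linked[OF fwd bwd n v, where j = h and s = u and t = "(a + 2) * P"
            and w = "(a + 2) * P"]) (auto simp: F B far)
  qed
qed

subsection \<open>Counting the nodes that are not dense\<close>

definition forward_sparse :: "nat set" where
  "forward_sparse = {x. x < n \<and> (\<exists>r \<ge> 1. x + r \<le> n \<and> K * card (T \<inter> {x..<x + r}) < r)}"

definition backward_sparse :: "nat set" where
  "backward_sparse = {x. x < n \<and> (\<exists>r \<ge> 1. r \<le> x + 1 \<and> K * card (T \<inter> {x + 1 - r..x}) < r)}"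

lemma card_forward_sparse:
  "x \<le> n \<Longrightarrow> (K - 1) * card (forward_sparse \<inter> {x..<n}) \<le> K * card ({x..<n} - T)"
proof (induction "n - x" arbitrary: x rule: less_induct)
  case less
  show ?case
  proof (cases "x \<in> forward_sparse")
    case False
    show ?thesis
    proof (cases "x < n")
      case True
      then have "{x..<n} = insert x {Suc x..<n}" by auto
      then have "forward_sparse \<inter> {x..<n} = forward_sparse \<inter> {Suc x..<n}" using False by auto
      moreover have "(K - 1) * card (forward_sparse \<inter> {Suc x..<n}) \<le> K * card ({Suc x..<n} - T)"
        using less.hyps[of "Suc x"] True by simp
      moreover have "card ({Suc x..<n} - T) \<le> card ({x..<n} - T)" by (intro card_mono) auto
      ultimately show ?thesis using mult_le_mono2 le_trans by metis
    qed simp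
  next
    case True
    then obtain r where r: "1 \<le> r" "x + r \<le> n" "K * card (T \<inter> {x..<x + r}) < r"
      by (auto simp: forward_sparse_def)
    have "card (forward_sparse \<inter> {x..<n}) \<le> card ({x..<x + r} \<union> (forward_sparse \<inter> {x + r..<n}))"
      by (rule card_mono) auto
    also have "\<dots> \<le> r + card (forward_sparse \<inter> {x + r..<n})"
      using card_Un_le[of "{x..<x + r}"] by simp
    finally have "(K - 1) * card (forward_sparse \<inter> {x..<n})
        \<le> (K - 1) * r + (K - 1) * card (forward_sparse \<inter> {x + r..<n})"
      by (simp flip: add_mult_distrib2)
    also have "\<dots> \<le> K * card ({x..<x + r} - T) + K * card ({x + r..<n} - T)"
    proof (rule add_le_mono)
      show "(K - 1) * r \<le> K * card ({x..<x + r} - T)"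
        using sparse_interval_card[of "{x..<x + r}" K T] r by simp
      show "(K - 1) * card (forward_sparse \<inter> {x + r..<n}) \<le> K * card ({x + r..<n} - T)"
        using less.hyps[of "x + r"] r True by (simp add: forward_sparse_def)
    qed
    also have "\<dots> = K * card ({x..<n} - T)"
    proof -
      have "{x..<n} - T = ({x..<x + r} - T) \<union> ({x + r..<n} - T)" using r by auto
      then have "card ({x..<n} - T) = card ({x..<x + r} - T) + card ({x + r..<n} - T)"
        by (simp only:) (rule card_Un_disjoint; auto)
      then show ?thesis by (simp add: add_mult_distrib2)
    qed
    finally show ?thesis .
  qed
qed

lemma card_backward_sparse:
  "x \<le> n \<Longrightarrow> (K - 1) * card (backward_sparse \<inter> {..<x}) \<le> K * card ({..<x} - T)"
proof (induction x rule: less_induct)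
  case (less x)
  show ?case
  proof (cases x)
    case (Suc y)
    show ?thesis
    proof (cases "y \<in> backward_sparse")
      case False
      have "{..<x} = insert y {..<y}" using Suc by auto
      then have "backward_sparse \<inter> {..<x} = backward_sparse \<inter> {..<y}" using False by auto
      moreover have "(K - 1) * card (backward_sparse \<inter> {..<y}) \<le> K * card ({..<y} - T)"
        using less Suc by simp
      moreover have "card ({..<y} - T) \<le> card ({..<x} - T)" using Suc by (intro card_mono) auto
      ultimately show ?thesis using mult_le_mono2 le_trans by metis
    next
      case True
      then obtain r where "1 \<le> r" "r \<le> Suc y" "K * card (T \<inter> {Suc y - r..y}) < r"
        by (auto simp: backward_sparse_def)
      moreover have "{Suc y - r..y} = {x - r..<x}" using Suc by auto
      ultimately have r: "1 \<le> r" "r \<le> x" "K * card (T \<inter> {x - r..<x}) < r" using Suc by simp_all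
      have split: "{..<x} = {..<x - r} \<union> {x - r..<x}" by (simp add: ivl_disj_un_one(2))
      have "card (backward_sparse \<inter> {..<x}) \<le> card ({x - r..<x} \<union> (backward_sparse \<inter> {..<x - r}))"
        unfolding split by (rule card_mono) auto
      also have "\<dots> \<le> r + card (backward_sparse \<inter> {..<x - r})"
        using card_Un_le[of "{x - r..<x}"] r by simp
      finally have "(K - 1) * card (backward_sparse \<inter> {..<x})
          \<le> (K - 1) * r + (K - 1) * card (backward_sparse \<inter> {..<x - r})"
        by (simp flip: add_mult_distrib2)
      also have "\<dots> \<le> K * card ({x - r..<x} - T) + K * card ({..<x - r} - T)"
      proof (rule add_le_mono)
        show "(K - 1) * r \<le> K * card ({x - r..<x} - T)"
          using sparse_interval_card[of "{x - r..<x}" K T] r by simp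
        show "(K - 1) * card (backward_sparse \<inter> {..<x - r}) \<le> K * card ({..<x - r} - T)"
          using less r by simp
      qed
      also have "\<dots> = K * card ({..<x} - T)"
      proof -
        have "{..<x} - T = ({x - r..<x} - T) \<union> ({..<x - r} - T)" unfolding split by blast
        moreover have "({x - r..<x} - T) \<inter> ({..<x - r} - T) = {}" by auto
        ultimately have "card ({..<x} - T) = card ({x - r..<x} - T) + card ({..<x - r} - T)"
          by (simp add: card_Un_disjoint)
        then show ?thesis by (simp add: add_mult_distrib2)
      qed
      finally show ?thesis .
    qed
  qed simp
qed

lemma card_forward_sparse_Int: "(K - 1) * card (forward_sparse \<inter> T) \<le> card ({..<n} - T)"
proof -
  have S: "{..<n} - T \<subseteq> forward_sparse" by (auto simp: forward_sparse_def intro!: exI[of _ 1])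
  have "forward_sparse \<inter> {0..<n} = forward_sparse" "{0..<n} = {..<n}" by (auto simp: forward_sparse_def)
  then have "(K - 1) * card forward_sparse \<le> K * card ({..<n} - T)"
    using card_forward_sparse[of 0] by simp
  then have "(K - 1) * card (forward_sparse - ({..<n} - T)) \<le> card ({..<n} - T)"
    using S by (intro card_Diff_mult_le) (auto simp: forward_sparse_def)
  moreover have "forward_sparse - ({..<n} - T) = forward_sparse \<inter> T" by (auto simp: forward_sparse_def)
  ultimately show ?thesis by simp
qed

lemma card_backward_sparse_Int: "(K - 1) * card (backward_sparse \<inter> T) \<le> card ({..<n} - T)"
proof -
  have S: "{..<n} - T \<subseteq> backward_sparse" by (auto simp: backward_sparse_def intro!: exI[of _ 1])
  have "backward_sparse \<inter> {..<n} = backward_sparse" by (auto simp: backward_sparse_def)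
  then have "(K - 1) * card backward_sparse \<le> K * card ({..<n} - T)"
    using card_backward_sparse[of n] by simp
  then have "(K - 1) * card (backward_sparse - ({..<n} - T)) \<le> card ({..<n} - T)"
    using S by (intro card_Diff_mult_le) (auto simp: backward_sparse_def)
  moreover have "backward_sparse - ({..<n} - T) = backward_sparse \<inter> T" by (auto simp: backward_sparse_def)
  ultimately show ?thesis by simp
qed

lemma depth_lower_bound:
  assumes "\<forall>(a, b) \<in> E. a < b"
  shows "(K - 1) * card T \<le> (K - 1) * depth T E + 2 * card ({..<n} - T)"
proof -
  define G where "G = {u. forward_dense u \<and> backward_dense u}"
  have fT: "finite T" using T_subset finite_subset by blast
  have GT: "G \<subseteq> T" by (auto simp: G_def forward_dense_def)
  have "card G \<le> depth T E"
    using card_chain_le_depth[OF assms fT GT] dense_nodes_connected by (auto simp: G_def ET_def)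
  then have "(K - 1) * card G \<le> (K - 1) * depth T E" by (rule mult_le_mono2)
  have "T - G \<subseteq> (forward_sparse \<inter> T) \<union> (backward_sparse \<inter> T)"
  proof
    fix u assume u: "u \<in> T - G"
    then have "u < n" using T_subset by auto
    then show "u \<in> (forward_sparse \<inter> T) \<union> (backward_sparse \<inter> T)"
      using u unfolding G_def forward_dense_def backward_dense_def forward_sparse_def backward_sparse_def
      by (auto simp: not_le)
  qed
  then have "card (T - G) \<le> card ((forward_sparse \<inter> T) \<union> (backward_sparse \<inter> T))"
    using fT by (intro card_mono) auto
  also have "\<dots> \<le> card (forward_sparse \<inter> T) + card (backward_sparse \<inter> T)" by (rule card_Un_le)
  finally have "(K - 1) * card (T - G)
      \<le> (K - 1) * card (forward_sparse \<inter> T) + (K - 1) * card (backward_sparse \<inter> T)"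
    by (simp flip: add_mult_distrib2)
  then have "(K - 1) * card (T - G) \<le> 2 * card ({..<n} - T)"
    using card_forward_sparse_Int card_backward_sparse_Int by linarith
  moreover have "card T = card G + card (T - G)"
    using card_Int_Diff[OF fT, of G] GT by (simp add: Int_absorb1)
  then have "(K - 1) * card T = (K - 1) * card G + (K - 1) * card (T - G)"
    by (simp add: add_mult_distrib2)
  ultimately show ?thesis using \<open>(K - 1) * card G \<le> (K - 1) * depth T E\<close> by linarith
qed

end

section \<open>Depth-robustness\<close>

lemma depth_robust_expander_dag:
  fixes \<epsilon> :: real
  assumes K: "K \<ge> 2" "2 \<le> real (K - 1) * \<epsilon>" and ed: "real e + real d \<le> (1 - \<epsilon>) * real n"
  shows "depth_robust {0..<n} (expander_dag (8 * K) n) e d"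
  unfolding depth_robust_def
proof (intro allI impI)
  fix S assume S: "S \<subseteq> {0..<n}" "card S \<le> e"
  define T where "T = {0..<n} - S"
  define D where "D = depth T (expander_dag (8 * K) n)"
  interpret locally_expanding n "8 * K" K "expander_dag (8 * K) n" T
    using local_expansion_expander_dag[of "8 * K" n] K by unfold_locales (auto simp: T_def)
  have "\<forall>(a, b) \<in> expander_dag (8 * K) n. a < b"
    using expander_dag_forward[of "8 * K" _ _ n] K by auto
  then have "(K - 1) * card T \<le> (K - 1) * D + 2 * card ({..<n} - T)"
    unfolding D_def by (rule depth_lower_bound)
  also have "card ({..<n} - T) \<le> n" using card_mono[of "{..<n}" "{..<n} - T"] by simp
  finally have nat_bound: "(K - 1) * card T \<le> (K - 1) * D + 2 * n" by simp
  have "real n - real e \<le> real (card T)"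
    using S by (simp add: T_def card_Diff_subset finite_subset of_nat_diff)
  then have "real (K - 1) * (real n - real e) \<le> real (K - 1) * real (card T)"
    by (rule mult_left_mono) simp
  also have "\<dots> \<le> real (K - 1) * real D + 2 * real n"
    using nat_bound by (simp flip: of_nat_mult of_nat_add)
  also have "2 * real n \<le> real (K - 1) * \<epsilon> * real n" by (rule mult_right_mono[OF K(2)]) simp
  finally have "real (K - 1) * (real n - real e - \<epsilon> * real n) \<le> real (K - 1) * real D"
    by (simp add: algebra_simps)
  then have "real n - real e - \<epsilon> * real n \<le> real D"
    using K(1) by (subst (asm) mult_le_cancel_left_pos) auto
  then show "d \<le> depth ({0..<n} - S) (expander_dag (8 * K) n)"
    using ed by (simp add: D_def T_def algebra_simps)
qed

theorem mainTheorem8: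
  fixes \<epsilon> :: real
  assumes "\<epsilon> > 0"
  shows "\<exists>C :: real. \<exists>G :: nat \<Rightarrow> (nat \<times> nat) set.
           \<forall>n \<ge> 2.
             is_dag {0..<n} (G n) \<and>
             (\<forall>v \<in> {0..<n}. real (indegree (G n) v) \<le> C * ln (real n)) \<and>
             (\<forall>e d :: nat. real e + real d \<le> (1 - \<epsilon>) * real n \<longrightarrow> depth_robust {0..<n} (G n) e d)"
proof -
  define K where "K = nat \<lceil>2 / \<epsilon>\<rceil> + 2"
  have "2 / \<epsilon> \<le> real (K - 1)" by (simp add: K_def) linarith
  then have K: "K \<ge> 2" "2 \<le> real (K - 1) * \<epsilon>" using assms by (auto simp: K_def pos_divide_le_eq)
  have "8 * K \<ge> 2" using K by simp
  then show ?thesis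
    using is_dag_expander_dag indegree_expander_dag depth_robust_expander_dag[OF K]
    by (intro exI[of _ "3 * real (3 * (8 * K)\<^sup>2)"] exI[of _ "expander_dag (8 * K)"]) blast
qed

end
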